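(* Let $m\in\mathbb{N}$, let $p,h$ be integers with $0\le p\le h$, and let $M$ be a subdiamond of $D_m$ of height $2^h$. If $A\subseteq M$ satisfies $d_{D_m}(u,v)\ge 2^p$ for all distinct $u,v\in A$, then $|A|\le 2\cdot 4^{h-p}$.
   Context: Diamonds: $D_0$ has two vertices joined by an edge; $D_i$ is obtained from $D_{i-1}$ by replacing each edge $uv$ by a quadrilateral $u,a,v,b$. $D_m$ carries the shortest path metric on its vertex set with edges of length $1$. A subdiamond of $D_m$ is the set of vertices of $D_m$ that evolved (in the steps $j+1,\dots,m$ of the construction) from a single edge $e$ of some $D_j$, $0\le j\le m$, including the endpoints of $e$; these endpoints are its bottom and top, and its height is the distance between top and bottom, equal to $2^{m-j}$. *)

theory Defs
  imports Main
begin

text \<open>Bot and Top are the two vertices of D_0;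
  Mid u v s is the new vertex created when the edge (u,v) is replaced by the
  quadrilateral u, Mid u v False, v, Mid u v True.
  Edges are stored oriented from bottom to top.\<close>
datatype dvert = Bot | Top | Mid dvert dvert bool

definition refine :: "(dvert \<times> dvert) set \<Rightarrow> (dvert \<times> dvert) set" where
  "refine E = (\<Union>(u,v)\<in>E. \<Union>s. {(u, Mid u v s), (Mid u v s, v)})"

definition dedges :: "nat \<Rightarrow> (dvert \<times> dvert) set" where
  "dedges j = (refine ^^ j) {(Bot, Top)}"

definition endpoints :: "(dvert \<times> dvert) set \<Rightarrow> dvert set" where
  "endpoints E = fst ` E \<union> snd ` E"

definition dverts :: "nat \<Rightarrow> dvert set" where
  "dverts m = endpoints (dedges m)"

definition dadj :: "nat \<Rightarrow> (dvert \<times> dvert) set" where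
  "dadj m = dedges m \<union> converse (dedges m)"

definition ddist :: "nat \<Rightarrow> dvert \<Rightarrow> dvert \<Rightarrow> nat" where
  "ddist m u v = (LEAST n. (u, v) \<in> dadj m ^^ n)"

text \<open>The subdiamond of D_m evolved from edge e of D_j (j \<le> m): the vertex set
  of the graph obtained from the single edge e by the m - j refinement steps.
  Its height is 2^(m-j).\<close>
definition subdiamond :: "nat \<Rightarrow> nat \<Rightarrow> dvert \<times> dvert \<Rightarrow> dvert set" where
  "subdiamond m j e = endpoints ((refine ^^ (m - j)) {e})"

end

theory Submission
  imports Defs
begin

text \<open>A subdiamond of height \<open>2^h\<close> is the union of \<open>4^(h-p)\<close> subdiamonds of height \<open>2^p\<close>,
  so it suffices that a subdiamond of height \<open>H = 2^p\<close> contains at most two points at pairwise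
  distance \<open>\<ge> H\<close>. Every vertex \<open>x\<close> of a subdiamond with bottom \<open>u\<close> and top \<open>v\<close> has a level
  \<open>a \<le> H\<close>: there are walks of lengths \<open>a\<close> from \<open>u\<close> to \<open>x\<close> and \<open>H - a\<close> from \<open>x\<close> to \<open>v\<close>.
  Going around through \<open>u\<close> and through \<open>v\<close> shows that two points at distance \<open>\<ge> H\<close> have
  levels summing to \<open>H\<close>; three such points would all have level \<open>H/2\<close>, which is impossible
  for \<open>H = 1\<close>, while for \<open>H \<ge> 2\<close> only the two middle vertices have level \<open>H/2\<close>.\<close>

lemma refine_UN: "refine (\<Union>i\<in>I. B i) = (\<Union>i\<in>I. refine (B i))"
  unfolding refine_def by blast

lemma refine_singleton:
  "refine {(u,v)} = {(u, Mid u v False), (Mid u v False, v), (u, Mid u v True), (Mid u v True, v)}"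
proof -
  have "(\<Union>s. {(u, Mid u v s), (Mid u v s, v)}) =
      {(u, Mid u v False), (Mid u v False, v)} \<union> {(u, Mid u v True), (Mid u v True, v)}"
    by (simp only: UNIV_bool) auto
  then show ?thesis unfolding refine_def by auto
qed

lemma refine_funpow_UN_singletons: "(refine ^^ k) X = (\<Union>f\<in>X. (refine ^^ k) {f})"
proof (induction k)
  case 0 then show ?case by auto
next
  case (Suc k)
  then show ?case by (simp add: refine_UN)
qed

lemma refine_funpow_mono: "X \<subseteq> Y \<Longrightarrow> (refine ^^ k) X \<subseteq> (refine ^^ k) Y"
  by (subst (1 2) refine_funpow_UN_singletons) blast

lemma refine_funpow_Suc_singleton: "(refine ^^ Suc k) {(u,v)} =
   (refine ^^ k) {(u, Mid u v False)} \<union> (refine ^^ k) {(Mid u v False, v)} \<union>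
   (refine ^^ k) {(u, Mid u v True)} \<union> (refine ^^ k) {(Mid u v True, v)}"
proof -
  have "(refine ^^ Suc k) {(u,v)} = (refine ^^ k) (refine {(u,v)})"
    by (simp add: funpow_Suc_right del: funpow.simps)
  also have "\<dots> = (\<Union>f\<in>refine {(u,v)}. (refine ^^ k) {f})"
    by (rule refine_funpow_UN_singletons)
  finally show ?thesis by (simp add: refine_singleton) blast
qed

lemma refine_funpow_Suc_subsetD:
  assumes "(refine ^^ Suc k) {(u,v)} \<subseteq> D"
  shows "(refine ^^ k) {(u, Mid u v s)} \<subseteq> D" "(refine ^^ k) {(Mid u v s, v)} \<subseteq> D"
  using assms refine_funpow_Suc_singleton[of k u v] by (cases s; auto)+

lemma endpoints_Un: "endpoints (X \<union> Y) = endpoints X \<union> endpoints Y"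
  unfolding endpoints_def by blast

lemma endpoints_UN: "endpoints (\<Union>i\<in>I. B i) = (\<Union>i\<in>I. endpoints (B i))"
  unfolding endpoints_def by blast

lemma endpoints_refine_funpow_Suc_singletonE:
  assumes "x \<in> endpoints ((refine ^^ Suc k) {(u,v)})"
  obtains s where "x \<in> endpoints ((refine ^^ k) {(u, Mid u v s)})"
    | s where "x \<in> endpoints ((refine ^^ k) {(Mid u v s, v)})"
  using assms unfolding refine_funpow_Suc_singleton endpoints_Un by blast

lemma endpoints_refine_funpow_split:
  "q \<le> k \<Longrightarrow> endpoints ((refine ^^ k) {e}) =
    (\<Union>f\<in>(refine ^^ (k - q)) {e}. endpoints ((refine ^^ q) {f}))"
proof -
  assume "q \<le> k"
  then have "(refine ^^ k) {e} = (refine ^^ q) ((refine ^^ (k - q)) {e})"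
    using funpow_add[of q "k - q" refine] by simp
  then show ?thesis
    by (simp only: refine_funpow_UN_singletons[of q "(refine ^^ (k - q)) {e}"] endpoints_UN)
qed

lemma refine_funpow_subset_dedges: "e \<in> dedges j \<Longrightarrow> (refine ^^ k) {e} \<subseteq> dedges (k + j)"
  using refine_funpow_mono[of "{e}" "dedges j" k]
  unfolding dedges_def by (simp add: funpow_add)

lemma finite_card_refine: "finite E \<Longrightarrow> finite (refine E) \<and> card (refine E) \<le> 4 * card E"
proof -
  assume fin: "finite E"
  have eq: "refine E = (\<Union>f\<in>E. refine {f})" using refine_UN[of "\<lambda>f. {f}" E] by simp
  have fin_single: "finite (refine {f})" and card_single: "card (refine {f}) \<le> 4" for f
    by (cases f; simp add: refine_singleton card_insert_if)+
  have "card (refine E) \<le> (\<Sum>f\<in>E. card (refine {f}))"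
    unfolding eq by (rule card_UN_le[OF fin])
  also have "\<dots> \<le> (\<Sum>f\<in>E. 4)" by (rule sum_mono) (rule card_single)
  finally show ?thesis using fin fin_single eq by simp
qed

lemma finite_card_refine_funpow_singleton:
  "finite ((refine ^^ k) {e}) \<and> card ((refine ^^ k) {e}) \<le> 4 ^ k"
proof (induction k)
  case 0 then show ?case by simp
next
  case (Suc k)
  then show ?case using finite_card_refine[of "(refine ^^ k) {e}"] by auto
qed

lemma dadj_relpow_sym: "(x,y) \<in> dadj m ^^ n \<Longrightarrow> (y,x) \<in> dadj m ^^ n"
proof (induction n arbitrary: x y)
  case 0 then show ?case by simp
next
  case (Suc n)
  then obtain z where "(x,z) \<in> dadj m ^^ n" "(z,y) \<in> dadj m" by auto
  then have "(z,x) \<in> dadj m ^^ n" "(y,z) \<in> dadj m" using Suc.IH by (auto simp: dadj_def)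
  then show ?case by (meson relpow_Suc_I2)
qed

lemma relpow_trans: "(x,y) \<in> R ^^ a \<Longrightarrow> (y,z) \<in> R ^^ b \<Longrightarrow> (x,z) \<in> R ^^ (a + b)"
  by (auto simp: relpow_add)

lemma ddist_le: "(x,y) \<in> dadj m ^^ n \<Longrightarrow> ddist m x y \<le> n"
  unfolding ddist_def by (rule Least_le)

lemma dadj_relpow_bottom_top:
  "(refine ^^ k) {(u,v)} \<subseteq> dedges m \<Longrightarrow> (u,v) \<in> dadj m ^^ (2^k)"
proof (induction k arbitrary: u v)
  case 0 then show ?case by (auto simp: dadj_def)
next
  case (Suc k)
  have "(u, Mid u v False) \<in> dadj m ^^ (2^k)" "(Mid u v False, v) \<in> dadj m ^^ (2^k)"
    using Suc.IH refine_funpow_Suc_subsetD[OF Suc.prems] by blast+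
  then show ?case using relpow_trans by (fastforce simp: mult_2)
qed

definition at_level :: "nat \<Rightarrow> dvert \<Rightarrow> dvert \<Rightarrow> nat \<Rightarrow> nat \<Rightarrow> dvert \<Rightarrow> bool" where
  "at_level m u v H a x \<longleftrightarrow> a \<le> H \<and> (u,x) \<in> dadj m ^^ a \<and> (x,v) \<in> dadj m ^^ (H - a)"

lemma at_level_lower_half:
  "at_level m u w H a x \<Longrightarrow> (w,v) \<in> dadj m ^^ H \<Longrightarrow> at_level m u v (2 * H) a x"
  unfolding at_level_def using relpow_trans[where x=x and y=w and z=v and R="dadj m" and a="H - a" and b=H]
  by (auto simp: mult_2)

lemma at_level_upper_half:
  "(u,w) \<in> dadj m ^^ H \<Longrightarrow> at_level m w v H a x \<Longrightarrow> at_level m u v (2 * H) (H + a) x"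
  unfolding at_level_def using relpow_trans[where x=u and y=w and z=x and R="dadj m" and a=H and b=a] by auto

lemma at_level_Suc_step:
  assumes sub: "(refine ^^ Suc k) {(u,v)} \<subseteq> dedges m"
    and x: "x \<in> endpoints ((refine ^^ Suc k) {(u,v)})"
    and halves: "\<And>u' v'. (refine ^^ k) {(u',v')} \<subseteq> dedges m \<Longrightarrow>
        x \<in> endpoints ((refine ^^ k) {(u',v')}) \<Longrightarrow> \<exists>a. at_level m u' v' (2^k) a x"
  shows "\<exists>a. at_level m u v (2^Suc k) a x \<and> (a = 2^k \<longrightarrow> x = Mid u v False \<or> x = Mid u v True)"
proof -
  have mid: "w = Mid u v False \<or> w = Mid u v True" if "w = Mid u v s" for w s
    using that by (cases s) auto
  from x show ?thesis
  proof (cases rule: endpoints_refine_funpow_Suc_singletonE)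
    case (1 s)
    let ?w = "Mid u v s"
    note subs = refine_funpow_Suc_subsetD[OF sub, of s]
    obtain a where a: "at_level m u ?w (2^k) a x" using halves subs(1) 1 by blast
    have "at_level m u v (2^Suc k) a x"
      using at_level_lower_half[OF a dadj_relpow_bottom_top[OF subs(2)]] by simp
    moreover have "a = 2^k \<longrightarrow> x = ?w" using a by (auto simp: at_level_def)
    ultimately show ?thesis using mid by blast
  next
    case (2 s)
    let ?w = "Mid u v s"
    note subs = refine_funpow_Suc_subsetD[OF sub, of s]
    obtain a where a: "at_level m ?w v (2^k) a x" using halves subs(2) 2 by blast
    have "at_level m u v (2^Suc k) (2^k + a) x"
      using at_level_upper_half[OF dadj_relpow_bottom_top[OF subs(1)] a] by simp
    moreover have "2^k + a = 2^k \<longrightarrow> x = ?w" using a by (auto simp: at_level_def)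
    ultimately show ?thesis using mid by blast
  qed
qed

lemma subdiamond_at_level:
  "(refine ^^ k) {(u,v)} \<subseteq> dedges m \<Longrightarrow> x \<in> endpoints ((refine ^^ k) {(u,v)}) \<Longrightarrow>
    \<exists>a. at_level m u v (2^k) a x"
proof (induction k arbitrary: u v)
  case 0
  then have "(u,v) \<in> dadj m" "x = u \<or> x = v" by (auto simp: dadj_def endpoints_def)
  then show ?case
  proof (elim disjE)
    assume "x = u"
    then show ?thesis using \<open>(u,v) \<in> dadj m\<close> unfolding at_level_def by (intro exI[of _ 0]) auto
  next
    assume "x = v"
    then show ?thesis using \<open>(u,v) \<in> dadj m\<close> unfolding at_level_def by (intro exI[of _ 1]) auto
  qed
next
  case (Suc k)
  show ?case using at_level_Suc_step[OF Suc.prems Suc.IH] by blast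
qed

lemma at_level_far_apart_sum:
  assumes "at_level m u v H a x" "at_level m u v H b y" "H \<le> ddist m x y"
  shows "a + b = H"
proof -
  have "(u,x) \<in> dadj m ^^ a" "(x,v) \<in> dadj m ^^ (H - a)" "a \<le> H"
    and "(u,y) \<in> dadj m ^^ b" "(y,v) \<in> dadj m ^^ (H - b)" "b \<le> H"
    using assms(1,2) unfolding at_level_def by auto
  then have "(x,y) \<in> dadj m ^^ (a + b)" "(x,y) \<in> dadj m ^^ ((H - a) + (H - b))"
    by (meson relpow_trans dadj_relpow_sym)+
  then have "ddist m x y \<le> a + b" "ddist m x y \<le> (H - a) + (H - b)"
    by (simp_all add: ddist_le)
  then show ?thesis using assms(3) \<open>a \<le> H\<close> \<open>b \<le> H\<close> by linarith
qed

lemma card_far_apart_in_subdiamond: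
  assumes sub: "(refine ^^ p) {(u,v)} \<subseteq> dedges m"
    and B: "B \<subseteq> endpoints ((refine ^^ p) {(u,v)})"
    and far: "\<forall>x\<in>B. \<forall>y\<in>B. x \<noteq> y \<longrightarrow> ddist m x y \<ge> 2 ^ p"
  shows "card B \<le> 2"
proof (rule ccontr)
  assume "\<not> card B \<le> 2"
  then have "Suc (Suc (Suc 0)) \<le> card B" by simp
  then obtain x y z where xyz: "x \<in> B" "y \<in> B" "z \<in> B" "x \<noteq> y" "x \<noteq> z" "y \<noteq> z"
    by (auto simp: card_le_Suc_iff)
  have three_levels: "2 * a = 2 ^ p \<and> b = a \<and> c = a"
    if "at_level m u v (2^p) a x" "at_level m u v (2^p) b y" "at_level m u v (2^p) c z" for a b c
  proof -
    have "a + b = 2^p" "a + c = 2^p" "b + c = 2^p"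
      using at_level_far_apart_sum that far xyz by meson+
    then show ?thesis by linarith
  qed
  show False
  proof (cases p)
    case 0
    obtain a where "at_level m u v (2^p) a x" using subdiamond_at_level[OF sub] B xyz(1) by blast
    moreover obtain b where "at_level m u v (2^p) b y" using subdiamond_at_level[OF sub] B xyz(2) by blast
    moreover obtain c where "at_level m u v (2^p) c z" using subdiamond_at_level[OF sub] B xyz(3) by blast
    ultimately have "2 * a = 1" using three_levels 0 by simp
    then show False by presburger
  next
    case (Suc k)
    have level_mid: "\<exists>a. at_level m u v (2^p) a w \<and> (a = 2^k \<longrightarrow> w = Mid u v False \<or> w = Mid u v True)"
      if "w \<in> B" for w
      using at_level_Suc_step[OF _ _ subdiamond_at_level] sub B that unfolding Suc by blast
    obtain a where "at_level m u v (2^p) a x" "a = 2^k \<longrightarrow> x = Mid u v False \<or> x = Mid u v True"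
      using level_mid xyz(1) by blast
    moreover obtain b where "at_level m u v (2^p) b y" "b = 2^k \<longrightarrow> y = Mid u v False \<or> y = Mid u v True"
      using level_mid xyz(2) by blast
    moreover obtain c where "at_level m u v (2^p) c z" "c = 2^k \<longrightarrow> z = Mid u v False \<or> z = Mid u v True"
      using level_mid xyz(3) by blast
    ultimately show False using three_levels[of a b c] Suc xyz(4-6) by auto
  qed
qed

theorem lemmaL:
  fixes m p h j :: nat and e :: "dvert \<times> dvert" and M A :: "dvert set"
  assumes "p \<le> h"
    and "j \<le> m" and "e \<in> dedges j" and "M = subdiamond m j e"
    and "(2::nat) ^ (m - j) = 2 ^ h"
    and "A \<subseteq> M"
    and "\<forall>u\<in>A. \<forall>v\<in>A. u \<noteq> v \<longrightarrow> ddist m u v \<ge> 2 ^ p"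
  shows "card A \<le> 2 * 4 ^ (h - p)"
proof -
  have h: "m - j = h" using assms(5) by (simp add: power_inject_exp)
  define F where "F = (refine ^^ (h - p)) {e}"
  define P where "P f = endpoints ((refine ^^ p) {f})" for f
  have finF: "finite F" and cardF: "card F \<le> 4 ^ (h - p)"
    using finite_card_refine_funpow_singleton F_def by auto
  have "M = (\<Union>f\<in>F. P f)"
    using endpoints_refine_funpow_split[OF assms(1)] assms(4) h
    unfolding subdiamond_def F_def P_def by simp
  then have A: "A = (\<Union>f\<in>F. A \<inter> P f)" using assms(6) by blast
  have "card (A \<inter> P f) \<le> 2" if "f \<in> F" for f
  proof -
    obtain u v where f: "f = (u,v)" by fastforce
    have "f \<in> dedges (h - p + j)"
      using refine_funpow_subset_dedges[OF assms(3)] that unfolding F_def by blast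
    then have "(refine ^^ p) {(u,v)} \<subseteq> dedges (p + (h - p + j))"
      using refine_funpow_subset_dedges f by blast
    moreover have "p + (h - p + j) = m" using assms(1,2) h by simp
    ultimately show ?thesis
      using card_far_apart_in_subdiamond[of p u v m "A \<inter> P f"] assms(7)
      unfolding P_def f by auto
  qed
  then have "(\<Sum>f\<in>F. card (A \<inter> P f)) \<le> (\<Sum>f\<in>F. 2)" by (rule sum_mono)
  moreover have "card A \<le> (\<Sum>f\<in>F. card (A \<inter> P f))"
    by (subst A) (rule card_UN_le[OF finF])
  ultimately show ?thesis using cardF by simp
qed

end
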